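(* For every positive integer $n$, \[ \sum_{k=1}^{n}{n\brace k}\binom{-1/2}{k}k!\,H_k\,(-1)^n2^n=\sum_{k=0}^{n-1}\binom{n}{k+1}E_k(1). \]
   Context: ${n\brace k}$ is the Stirling number of the second kind, $H_k=\sum_{i=1}^k1/i$, $\binom{x}{k}=x(x-1)\cdots(x-k+1)/k!$. The Euler polynomials $E_n(x)$ are defined by $\sum_{n\ge0}E_n(x)\frac{t^n}{n!}=\frac{2}{e^t+1}e^{xt}$. *)

theory Defs
  imports "HOL-Analysis.Analysis" "HOL-Combinatorics.Stirling"
    "HOL-Computational_Algebra.Formal_Power_Series"
begin

definition euler_poly :: "nat \<Rightarrow> real \<Rightarrow> real" where
  "euler_poly n x = fact n * fps_nth (fps_const 2 * fps_exp x / (fps_exp 1 + 1)) n"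

end

theory Submission
  imports Defs
begin

text \<open>Both sides equal sum_{m<n} E_m(2). On the right this follows from
  E_m(x + 1) = sum_k C(m,k) E_k(x) and C(n,k+1) = sum_{m<n} C(m,k). On the left, put
  c_k = binom(-1/2, k) and F_n = sum_k S(n,k) c_k k! H_k. The Stirling recurrence, together
  with (k+1) c_{k+1} = (-1/2 - k) c_k and H_{k+1} = H_k + 1/(k+1), gives
  F_{n+1} = -F_n/2 + sum_k S(n,k) k! c_{k+1}. Since sum_k S(n,k) k! a_k t^n/n! is the
  substitution x = e^t - 1 into sum_k a_k x^k, the exponential generating function of
  (-2)^n sum_k S(n,k) k! c_{k+1} is ((1+x)^(-1/2) - 1)/x at x = e^(-2t) - 1, that is
  (e^t - 1)/(e^(-2t) - 1) = -e^(2t)/(e^t + 1), which is -1/2 times the generating function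
  of E_n(2). Hence (-2)^(n+1) F_{n+1} = (-2)^n F_n + E_n(2).\<close>

lemma fps_nth_exp_minus_one_power:
  fixes a :: "'a::field_char_0"
  shows "fps_nth ((fps_exp a - 1) ^ k) n = a ^ n * of_nat (Stirling n k) * fact k / fact n"
proof (induction n arbitrary: k)
  case 0
  then show ?case by (cases k) auto
next
  case (Suc n)
  show ?case
  proof (cases k)
    case 0
    then show ?thesis by simp
  next
    case (Suc j)
    let ?w = "fps_exp a - 1"
    have "fps_deriv (?w ^ Suc j) = fps_const (of_nat (Suc j)) * (fps_const a * fps_exp a) * ?w ^ j"
      by (simp only: fps_deriv_power) simp
    also have "\<dots> = fps_const (a * of_nat (Suc j)) * (fps_exp a * ?w ^ j)"
      by (simp only: fps_const_mult[symmetric] ac_simps)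
    also have "fps_exp a * ?w ^ j = (?w + 1) * ?w ^ j"
      by (simp only: diff_add_cancel)
    also have "\<dots> = ?w ^ Suc j + ?w ^ j"
      by (simp only: power_Suc distrib_right mult_1_left)
    finally have "fps_nth (fps_deriv (?w ^ Suc j)) n
        = fps_nth (fps_const (a * of_nat (Suc j)) * (?w ^ Suc j + ?w ^ j)) n"
      by (rule arg_cong)
    then have "of_nat (Suc n) * fps_nth (?w ^ Suc j) (Suc n)
        = a * of_nat (Suc j) * (fps_nth (?w ^ Suc j) n + fps_nth (?w ^ j) n)"
      by (simp only: fps_deriv_nth fps_add_nth fps_mult_left_const_nth mult.commute Suc_eq_plus1)
    then have "of_nat (Suc n) * fps_nth (?w ^ Suc j) (Suc n)
        = a * of_nat (Suc j) * (a ^ n * of_nat (Stirling n (Suc j)) * fact (Suc j) / fact n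
            + a ^ n * of_nat (Stirling n j) * fact j / fact n)"
      by (simp only: Suc.IH)
    also have "\<dots> = of_nat (Suc n)
        * (a ^ Suc n * of_nat (Stirling (Suc n) (Suc j)) * fact (Suc j) / fact (Suc n))"
      by (simp add: field_simps del: of_nat_Suc) (simp add: algebra_simps)
    finally show ?thesis
      unfolding Suc by (simp only: mult_left_cancel of_nat_eq_0_iff nat.distinct(1) simp_thms)
  qed
qed

lemma fps_compose_exp_minus_one_nth:
  fixes a :: "'a::field_char_0"
  shows "fps_nth (f oo (fps_exp a - 1)) n
    = a ^ n / fact n * (\<Sum>k\<le>n. of_nat (Stirling n k) * fact k * fps_nth f k)"
  unfolding fps_compose_nth fps_nth_exp_minus_one_power atLeast0AtMost sum_distrib_left
  by (rule sum.cong) (simp_all add: field_simps)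

lemma fps_binomial_compose_exp_minus_one:
  fixes a b :: "'a::field_char_0"
  shows "fps_binomial a oo (fps_exp b - 1) = fps_exp (a * b)"
proof -
  let ?w = "fps_exp b - 1" and ?B = "fps_binomial a"
  have w0: "fps_nth ?w 0 = 0" by simp
  have "(1 + fps_X) * fps_deriv ?B = fps_const a * ?B"
    by (simp add: fps_binomial_deriv fps_divide_unit mult.commute[of "1 + fps_X"]
        mult.assoc inverse_mult_eq_1)
  then have "((1 + fps_X) oo ?w) * (fps_deriv ?B oo ?w) = fps_const a * (?B oo ?w)"
    by (metis fps_compose_mult_distrib[OF w0] fps_const_compose)
  then have "fps_exp b * (fps_deriv ?B oo ?w) = fps_const a * (?B oo ?w)"
    by (simp add: fps_compose_add_distrib w0)
  then have "fps_deriv (?B oo ?w) = fps_const (a * b) * (?B oo ?w)"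
    by (simp add: fps_compose_deriv[OF w0] algebra_simps flip: fps_const_mult)
  then show ?thesis
    by (simp add: fps_exp_unique_ODE)
qed

lemma fps_shift_binomial_compose_exp_minus_one:
  fixes a b :: "'a::field_char_0"
  shows "(fps_exp b - 1) * (fps_shift 1 (fps_binomial a) oo (fps_exp b - 1))
    = fps_exp (a * b) - 1"
proof -
  let ?w = "fps_exp b - 1"
  have w0: "fps_nth ?w 0 = 0" by simp
  have "fps_X * fps_shift 1 (fps_binomial a) = fps_binomial a - 1"
    by (rule fps_ext) simp
  then have "(fps_X oo ?w) * (fps_shift 1 (fps_binomial a) oo ?w) = (fps_binomial a - 1) oo ?w"
    by (simp only: fps_compose_mult_distrib[OF w0, symmetric])
  then show ?thesis
    by (simp add: w0 fps_compose_sub_distrib fps_binomial_compose_exp_minus_one)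
qed

lemma euler_poly_eqI:
  assumes "f * (fps_exp 1 + 1) = fps_const 2 * fps_exp x"
  shows "euler_poly n x = fact n * fps_nth f n"
proof -
  have unit: "fps_nth (fps_exp (1::real) + 1) 0 \<noteq> 0" by simp
  have "f = fps_const 2 * fps_exp x * inverse (fps_exp 1 + 1)"
    by (simp flip: assms
        add: mult.assoc inverse_mult_eq_1[OF unit] mult.commute[of _ "inverse _"])
  then show ?thesis
    by (simp add: euler_poly_def fps_divide_unit[OF unit])
qed

lemma euler_poly_egf_mult:
  "Abs_fps (\<lambda>n. euler_poly n x / fact n) * (fps_exp 1 + 1) = fps_const 2 * fps_exp x"
proof -
  have unit: "fps_nth (fps_exp (1::real) + 1) 0 \<noteq> 0" by simp
  have "Abs_fps (\<lambda>n. euler_poly n x / fact n)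
      = fps_const 2 * fps_exp x * inverse (fps_exp 1 + 1)"
    by (rule fps_ext) (simp add: euler_poly_def fps_divide_unit[OF unit])
  then show ?thesis
    by (simp only: mult.assoc inverse_mult_eq_1[OF unit] mult_1_right)
qed

lemma euler_poly_binomial_sum:
  "(\<Sum>k\<le>n. real (n choose k) * euler_poly k x) = euler_poly n (x + 1)"
proof -
  let ?E = "Abs_fps (\<lambda>n. euler_poly n x / fact n)"
  have "?E * fps_exp 1 * (fps_exp 1 + 1) = fps_const 2 * fps_exp (x + 1)"
    by (simp add: euler_poly_egf_mult fps_exp_add_mult mult.assoc mult.commute[of "fps_exp 1"]
        flip: mult.assoc[of ?E])
  then have "euler_poly n (x + 1) = fact n * fps_nth (?E * fps_exp 1) n"
    by (rule euler_poly_eqI)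
  also have "\<dots> = (\<Sum>k\<le>n. fact n / (fact k * fact (n - k)) * euler_poly k x)"
    by (simp add: fps_mult_nth atLeast0AtMost sum_distrib_left)
  also have "\<dots> = (\<Sum>k\<le>n. real (n choose k) * euler_poly k x)"
    by (simp add: binomial_fact)
  finally show ?thesis ..
qed

lemma euler_poly_2_eq_Stirling_sum:
  "euler_poly n 2
    = (-2) ^ Suc n * (\<Sum>k\<le>n. real (Stirling n k) * fact k * ((-1/2) gchoose Suc k))"
proof -
  let ?w = "fps_exp (-2) - 1 :: real fps" and ?e = "fps_exp 1 :: real fps"
  let ?U = "fps_shift 1 (fps_binomial (-1/2)) oo ?w"
  have "?w * ?U = fps_exp ((-1/2) * (-2)) - 1"
    by (rule fps_shift_binomial_compose_exp_minus_one)
  then have w_U: "?w * ?U = ?e - 1"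
    by simp
  have exp_sq: "?e * ?e = fps_exp 2" and exp_cancel: "fps_exp 2 * fps_exp (-2) = (1 :: real fps)"
    by (simp_all flip: fps_exp_add_mult)
  have "?w * (fps_const (-2) * ?U * (?e + 1)) = fps_const (-2) * (?w * ?U) * (?e + 1)"
    by (simp only: ac_simps)
  also have "\<dots> = fps_const (-2) * (?e * ?e - 1)"
    by (simp only: w_U) (simp add: algebra_simps)
  also have "\<dots> = ?w * (fps_const 2 * fps_exp 2)"
    by (simp add: exp_sq exp_cancel algebra_simps flip: fps_const_neg)
  finally have "fps_const (-2) * ?U * (?e + 1) = fps_const 2 * fps_exp 2"
  proof (rule mult_left_cancel[THEN iffD1, rotated])
    have "fps_nth ?w 1 \<noteq> 0" by simp
    then show "?w \<noteq> 0" by auto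
  qed
  then have "euler_poly n 2 = fact n * fps_nth (fps_const (-2) * ?U) n"
    by (rule euler_poly_eqI)
  also have "\<dots> = fact n * (-2 * ((-2) ^ n / fact n
      * (\<Sum>k\<le>n. real (Stirling n k) * fact k * ((-1/2) gchoose Suc k))))"
    by (simp only: fps_mult_left_const_nth fps_compose_exp_minus_one_nth fps_shift_nth
        fps_binomial_nth of_nat_id Suc_eq_plus1)
  finally show ?thesis
    by simp
qed

lemma sum_Stirling_Suc:
  fixes g :: "nat \<Rightarrow> 'a::comm_semiring_1"
  shows "(\<Sum>k\<le>Suc n. of_nat (Stirling (Suc n) k) * g k)
    = (\<Sum>k\<le>n. of_nat (Stirling n k) * (of_nat k * g k + g (Suc k)))"
proof -
  define h where "h k = of_nat k * of_nat (Stirling n k) * g k" for k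
  have "(\<Sum>k\<le>n. h (Suc k)) = (\<Sum>k\<le>Suc n. h k)"
    by (simp only: sum.atMost_Suc_shift) (simp add: h_def)
  also have "\<dots> = (\<Sum>k\<le>n. h k)"
    by (simp add: h_def)
  finally have shift: "(\<Sum>k\<le>n. h (Suc k)) = (\<Sum>k\<le>n. h k)" .
  have "(\<Sum>k\<le>Suc n. of_nat (Stirling (Suc n) k) * g k)
      = (\<Sum>k\<le>n. h (Suc k)) + (\<Sum>k\<le>n. of_nat (Stirling n k) * g (Suc k))"
    by (simp add: sum.atMost_Suc_shift h_def sum.distrib algebra_simps del: sum.atMost_Suc)
  also have "\<dots> = (\<Sum>k\<le>n. of_nat (Stirling n k) * (of_nat k * g k + g (Suc k)))"
    by (simp only: shift) (simp add: h_def sum.distrib algebra_simps)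
  finally show ?thesis .
qed

lemma gbinomial_fact_harm_Suc:
  fixes a :: "'a::real_normed_field"
  shows "of_nat k * ((a gchoose k) * fact k * harm k)
      + (a gchoose Suc k) * fact (Suc k) * harm (Suc k)
    = a * ((a gchoose k) * fact k * harm k) + fact k * (a gchoose Suc k)"
proof -
  have absorb: "of_nat (Suc k) * (a gchoose Suc k) = a * (a gchoose k) - of_nat k * (a gchoose k)"
    using gbinomial_mult_1[of a k] by (simp add: algebra_simps)
  have "(a gchoose Suc k) * fact (Suc k) * harm (Suc k)
      = (of_nat (Suc k) * (a gchoose Suc k)) * fact k * harm k + fact k * (a gchoose Suc k)"
    by (simp add: harm_Suc field_simps del: of_nat_Suc)
  then show ?thesis
    by (simp only: absorb) (simp add: algebra_simps)
qed

lemma Stirling_gbinomial_harm_sum_Suc: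
  fixes a :: "'a::real_normed_field"
  shows "(\<Sum>k\<le>Suc n. of_nat (Stirling (Suc n) k) * (a gchoose k) * fact k * harm k)
    = a * (\<Sum>k\<le>n. of_nat (Stirling n k) * (a gchoose k) * fact k * harm k)
      + (\<Sum>k\<le>n. of_nat (Stirling n k) * fact k * (a gchoose Suc k))"
proof -
  define g where "g k = (a gchoose k) * fact k * harm k" for k
  have "(\<Sum>k\<le>Suc n. of_nat (Stirling (Suc n) k) * (a gchoose k) * fact k * harm k)
      = (\<Sum>k\<le>Suc n. of_nat (Stirling (Suc n) k) * g k)"
    by (simp add: g_def mult.assoc)
  also have "\<dots> = (\<Sum>k\<le>n. of_nat (Stirling n k) * (of_nat k * g k + g (Suc k)))"
    by (rule sum_Stirling_Suc)
  also have "\<dots> = (\<Sum>k\<le>n. of_nat (Stirling n k) * (a * g k + fact k * (a gchoose Suc k)))"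
    by (simp only: g_def gbinomial_fact_harm_Suc)
  also have "\<dots> = a * (\<Sum>k\<le>n. of_nat (Stirling n k) * (a gchoose k) * fact k * harm k)
      + (\<Sum>k\<le>n. of_nat (Stirling n k) * fact k * (a gchoose Suc k))"
    by (simp add: g_def sum.distrib sum_distrib_left algebra_simps)
  finally show ?thesis .
qed

lemma Stirling_harm_sum_eq_sum_euler_poly:
  "(-2) ^ n * (\<Sum>k\<le>n. real (Stirling n k) * ((-1/2) gchoose k) * fact k * harm k)
    = (\<Sum>m<n. euler_poly m 2)"
proof (induction n)
  case 0
  then show ?case by (simp add: harm_expand(1))
next
  case (Suc n)
  have "(-2) ^ Suc n
        * (\<Sum>k\<le>Suc n. real (Stirling (Suc n) k) * ((-1/2) gchoose k) * fact k * harm k)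
      = (-2) ^ n * (\<Sum>k\<le>n. real (Stirling n k) * ((-1/2) gchoose k) * fact k * harm k)
        + (-2) ^ Suc n * (\<Sum>k\<le>n. real (Stirling n k) * fact k * ((-1/2) gchoose Suc k))"
    by (simp only: Stirling_gbinomial_harm_sum_Suc) (simp add: algebra_simps)
  also have "\<dots> = (\<Sum>m<n. euler_poly m 2) + euler_poly n 2"
    by (simp only: Suc.IH euler_poly_2_eq_Stirling_sum[of n])
  finally show ?case
    by simp
qed

lemma sum_choose_Suc_eq_sum_sum:
  fixes f :: "nat \<Rightarrow> 'a::comm_semiring_1"
  shows "(\<Sum>k<n. of_nat (n choose Suc k) * f k)
    = (\<Sum>m<n. \<Sum>k\<le>m. of_nat (m choose k) * f k)"
proof (induction n)
  case 0
  then show ?case by simp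
next
  case (Suc n)
  have "(\<Sum>k<Suc n. of_nat (Suc n choose Suc k) * f k)
      = (\<Sum>k<Suc n. of_nat (n choose Suc k) * f k) + (\<Sum>k\<le>n. of_nat (n choose k) * f k)"
    by (simp add: sum.distrib algebra_simps lessThan_Suc_atMost del: sum.lessThan_Suc)
  also have "(\<Sum>k<Suc n. of_nat (n choose Suc k) * f k)
      = (\<Sum>k<n. of_nat (n choose Suc k) * f k)"
    by (simp add: binomial_eq_0)
  finally show ?case
    by (simp add: Suc.IH)
qed

theorem mainTheorem9:
  fixes n :: nat
  assumes "n \<ge> 1"
  shows "(\<Sum>k=1..n. real (Stirling n k) * ((-1/2 :: real) gchoose k) * fact k * harm k
            * (-1) ^ n * 2 ^ n)
         = (\<Sum>k=0..n-1. real (n choose (k+1)) * euler_poly k 1)"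
proof -
  have sign: "(-1) ^ n * 2 ^ n = (-2 :: real) ^ n"
    by (simp flip: power_mult_distrib)
  have drop_zero: "(\<Sum>k\<le>n. real (Stirling n k) * ((-1/2 :: real) gchoose k) * fact k * harm k)
      = (\<Sum>k=1..n. real (Stirling n k) * ((-1/2 :: real) gchoose k) * fact k * harm k)"
    by (simp add: atMost_atLeast0 sum.atLeast_Suc_atMost harm_expand(1))
  have "(\<Sum>k=1..n. real (Stirling n k) * ((-1/2 :: real) gchoose k) * fact k * harm k
            * (-1) ^ n * 2 ^ n)
      = (\<Sum>k=1..n. real (Stirling n k) * ((-1/2 :: real) gchoose k) * fact k * harm k)
            * (-1) ^ n * 2 ^ n"
    by (simp only: sum_distrib_right)
  also have "\<dots>
      = (-2) ^ n * (\<Sum>k\<le>n. real (Stirling n k) * ((-1/2) gchoose k) * fact k * harm k)"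
    by (simp only: drop_zero flip: sign) (simp only: ac_simps)
  also have "\<dots> = (\<Sum>m<n. euler_poly m 2)"
    by (rule Stirling_harm_sum_eq_sum_euler_poly)
  also have "\<dots> = (\<Sum>m<n. \<Sum>k\<le>m. real (m choose k) * euler_poly k 1)"
    by (simp add: euler_poly_binomial_sum)
  also have "\<dots> = (\<Sum>k<n. real (n choose Suc k) * euler_poly k 1)"
    by (rule sum_choose_Suc_eq_sum_sum[symmetric])
  also have "\<dots> = (\<Sum>k=0..n-1. real (n choose (k+1)) * euler_poly k 1)"
    using assms by (intro sum.cong) auto
  finally show ?thesis .
qed

end
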